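(* Let $\bar\gamma_{\mathrm{R}},\bar\gamma_{\mathrm{D}},\bar\gamma_{\mathrm{E}}>0$ and $\mathcal{R}>0$. Let $h_{\mathrm{S},\mathrm{R}},h_{\mathrm{R},\mathrm{D}},h_{\mathrm{R},\mathrm{E}}$ be independent $\mathcal{CN}(0,1)$ random variables. Define $$\mathcal{R}^{1}_{\mathrm{R}\to\mathrm{D}}=\max\left\{\log_2\frac{1+\bar\gamma_{\mathrm{D}}|h_{\mathrm{R},\mathrm{D}}|^2}{1+\bar\gamma_{\mathrm{E}}|h_{\mathrm{R},\mathrm{E}}|^2},0\right\},\qquad \mathcal{R}^{1}_{\mathrm{S}\to\mathrm{R}}=\log_2\left(1+\bar\gamma_{\mathrm{R}}|h_{\mathrm{S},\mathrm{R}}|^2\right),$$ $$\mathcal{R}_1=\max\left\{\min\{\mathcal{R}^{1}_{\mathrm{R}\to\mathrm{D}},\mathcal{R}^{1}_{\mathrm{S}\to\mathrm{R}}\},0\right\},\qquad \mathcal{P}_1=\Pr(\mathcal{R}_1<\mathcal{R}).$$ Then $$\mathcal{P}_1=1-\mathrm{e}^{-\frac{2^{\mathcal{R}}-1}{\bar\gamma_{\mathrm{R}}}-\frac{2^{\mathcal{R}}-1}{\bar\gamma_{\mathrm{D}}}}\cdot\frac{1}{1+\frac{2^{\mathcal{R}}}{\bar\gamma_{\mathrm{D}}}\bar\gamma_{\mathrm{E}}}.$$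
   Context: This models a decode-and-forward relay system (source S, relay R, destination D, eavesdropper E) in which the eavesdropper overhears only the relay's transmission. $\mathcal{CN}(0,1)$ denotes a circularly symmetric complex Gaussian random variable with zero mean and unit variance (Rayleigh fading), so $|h|^2$ is exponentially distributed with mean 1. $\bar\gamma_{\mathrm{R}},\bar\gamma_{\mathrm{D}},\bar\gamma_{\mathrm{E}}$ are the average SNRs at the relay, destination and eavesdropper; $\mathcal{R}_1$ is the secrecy capacity and $\mathcal{P}_1$ the secrecy outage probability for target rate $\mathcal{R}$. *)

theory Defs
  imports "HOL-Probability.Probability"
begin

text \<open>A complex random variable h is circularly symmetric complex Gaussian CN(0,1):
  its real and imaginary parts are independent real Gaussians with mean 0 and
  variance 1/2 (so that E |h|^2 = 1).\<close>
definition (in prob_space) std_cgauss :: "('a \<Rightarrow> complex) \<Rightarrow> bool" where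
  "std_cgauss h \<longleftrightarrow>
     distributed M lborel (\<lambda>\<omega>. Re (h \<omega>)) (normal_density 0 (sqrt (1/2))) \<and>
     distributed M lborel (\<lambda>\<omega>. Im (h \<omega>)) (normal_density 0 (sqrt (1/2))) \<and>
     indep_var borel (\<lambda>\<omega>. Re (h \<omega>)) borel (\<lambda>\<omega>. Im (h \<omega>))"

end

theory Submission
  imports Defs
begin

text \<open>For a CN(0,1) variable h, |h|^2 is exponentially distributed with mean 1: integrating the
  density exp(-(x^2 + y^2)) / pi over a disk, the substitution y = x s and Fubini reduce the integral
  to an elementary integral in x times the integral of 1 / (1 + s^2), which is pi.
  Unfolding the logarithms, the secrecy rate reaches R exactly when |h_SR|^2 >= a and
  |h_RD|^2 >= b + c |h_RE|^2, with a = (2^R - 1) / gR, b = (2^R - 1) / gD and c = 2^R gE / gD.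
  These two events are independent; the first has probability exp(-a), and conditioning on |h_RE|^2
  the second has probability E[exp(-(b + c |h_RE|^2))] = exp(-b) / (1 + c).\<close>

lemma nn_integral_lborel_even:
  fixes f :: "real \<Rightarrow> ennreal"
  assumes [measurable]: "f \<in> borel_measurable borel" and even: "\<And>x. f (- x) = f x"
  shows "(\<integral>\<^sup>+x. f x \<partial>lborel) = 2 * (\<integral>\<^sup>+x. f x * indicator {0..} x \<partial>lborel)"
proof -
  have "(\<integral>\<^sup>+x. f x \<partial>lborel) = (\<integral>\<^sup>+x. f x * indicator {0..} x + f x * indicator {..<0} x \<partial>lborel)"
    by (intro nn_integral_cong) (auto split: split_indicator)
  also have "\<dots> = (\<integral>\<^sup>+x. f x * indicator {0..} x \<partial>lborel) + (\<integral>\<^sup>+x. f x * indicator {..<0} x \<partial>lborel)"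
    by (rule nn_integral_add) auto
  also have "(\<integral>\<^sup>+x. f x * indicator {..<0} x \<partial>lborel)
      = (\<integral>\<^sup>+x. f (0 + (-1) * x) * indicator {..<0} (0 + (-1) * x) \<partial>lborel)"
    using nn_integral_real_affine[of "\<lambda>x. f x * indicator {..<0} x" "-1" 0] by simp
  also have "\<dots> = (\<integral>\<^sup>+x. f x * indicator {0..} x \<partial>lborel)"
    by (intro nn_integral_cong_AE eventually_mono[OF AE_lborel_singleton[of 0]])
      (auto simp: even split: split_indicator)
  finally show ?thesis
    by (simp add: mult_2)
qed

lemma nn_integral_lborel_inverse_one_plus_square:
  "(\<integral>\<^sup>+s. ennreal (1 / (1 + s\<^sup>2)) \<partial>lborel) = ennreal pi"
proof -
  have "(\<integral>\<^sup>+s. ennreal (1 / (1 + s\<^sup>2)) \<partial>lborel)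
      = 2 * (\<integral>\<^sup>+s. ennreal (1 / (1 + s\<^sup>2)) * indicator {0..} s \<partial>lborel)"
    by (rule nn_integral_lborel_even) auto
  also have "(\<integral>\<^sup>+s. ennreal (1 / (1 + s\<^sup>2)) * indicator {0..} s \<partial>lborel) = ennreal (pi / 2 - arctan 0)"
    by (rule nn_integral_FTC_atLeast[OF _ _ _ tendsto_arctan_at_top])
      (auto intro!: derivative_eq_intros simp: add_nonneg_eq_0_iff field_simps power2_eq_square)
  also have "2 * ennreal (pi / 2 - arctan 0) = ennreal pi"
    by (simp flip: ennreal_numeral ennreal_mult)
  finally show ?thesis .
qed

lemma nn_integral_abs_times_gaussian_sublevel:
  fixes k a :: real
  assumes k: "k > 0" and a: "a \<ge> 0"
  shows "(\<integral>\<^sup>+x. ennreal (if x\<^sup>2 * k \<le> a then \<bar>x\<bar> * exp (- (x\<^sup>2 * k)) else 0) \<partial>lborel)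
      = ennreal ((1 - exp (- a)) / k)"
proof -
  define r where "r = sqrt (a / k)"
  have r: "r \<ge> 0" "r\<^sup>2 * k = a"
    using k a by (auto simp: r_def)
  have sublevel_iff: "x\<^sup>2 * k \<le> a \<longleftrightarrow> x \<le> r" if "x \<ge> 0" for x
  proof -
    have "x\<^sup>2 * k \<le> a \<longleftrightarrow> x\<^sup>2 \<le> r\<^sup>2"
      using k by (simp flip: r(2))
    also have "\<dots> \<longleftrightarrow> x \<le> r"
      using that r by (simp flip: abs_le_square_iff)
    finally show ?thesis .
  qed
  have "(\<integral>\<^sup>+x. ennreal (if x\<^sup>2 * k \<le> a then \<bar>x\<bar> * exp (- (x\<^sup>2 * k)) else 0) \<partial>lborel)
      = 2 * (\<integral>\<^sup>+x. ennreal (if x\<^sup>2 * k \<le> a then \<bar>x\<bar> * exp (- (x\<^sup>2 * k)) else 0) * indicator {0..} x \<partial>lborel)"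
    by (rule nn_integral_lborel_even) auto
  also have "(\<integral>\<^sup>+x. ennreal (if x\<^sup>2 * k \<le> a then \<bar>x\<bar> * exp (- (x\<^sup>2 * k)) else 0) * indicator {0..} x \<partial>lborel)
      = (\<integral>\<^sup>+x. ennreal (x * exp (- (x\<^sup>2 * k))) * indicator {0..r} x \<partial>lborel)"
    by (intro nn_integral_cong) (auto simp: sublevel_iff split: split_indicator)
  also have "\<dots> = ennreal (- exp (- (r\<^sup>2 * k)) / (2 * k) - - exp (- (0\<^sup>2 * k)) / (2 * k))"
    by (rule nn_integral_FTC_Icc) (use k r in \<open>auto intro!: derivative_eq_intros simp: field_simps\<close>)
  also have "2 * \<dots> = ennreal ((1 - exp (- a)) / k)"
    unfolding r(2) using k a by (simp add: field_simps flip: ennreal_numeral ennreal_mult)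
  finally show ?thesis .
qed

lemma nn_integral_cgauss_density_disk:
  fixes a :: real
  assumes a: "a \<ge> 0"
  shows "(\<integral>\<^sup>+x. \<integral>\<^sup>+y. ennreal (if x\<^sup>2 + y\<^sup>2 \<le> a then exp (- (x\<^sup>2 + y\<^sup>2)) / pi else 0) \<partial>lborel \<partial>lborel)
      = ennreal (1 - exp (- a))"
proof -
  let ?G = "\<lambda>x s. ennreal (1 / pi) *
      ennreal (if x\<^sup>2 * (1 + s\<^sup>2) \<le> a then \<bar>x\<bar> * exp (- (x\<^sup>2 * (1 + s\<^sup>2))) else 0)"
  have substitution: "(\<integral>\<^sup>+y. ennreal (if x\<^sup>2 + y\<^sup>2 \<le> a then exp (- (x\<^sup>2 + y\<^sup>2)) / pi else 0) \<partial>lborel)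
      = (\<integral>\<^sup>+s. ?G x s \<partial>lborel)" if "x \<noteq> 0" for x
  proof -
    have "(\<integral>\<^sup>+y. ennreal (if x\<^sup>2 + y\<^sup>2 \<le> a then exp (- (x\<^sup>2 + y\<^sup>2)) / pi else 0) \<partial>lborel)
        = ennreal \<bar>x\<bar> * (\<integral>\<^sup>+s. ennreal (if x\<^sup>2 + (0 + x * s)\<^sup>2 \<le> a
            then exp (- (x\<^sup>2 + (0 + x * s)\<^sup>2)) / pi else 0) \<partial>lborel)"
      by (rule nn_integral_real_affine) (use that in auto)
    also have "\<dots> = (\<integral>\<^sup>+s. ennreal \<bar>x\<bar> * ennreal (if x\<^sup>2 + (0 + x * s)\<^sup>2 \<le> a
        then exp (- (x\<^sup>2 + (0 + x * s)\<^sup>2)) / pi else 0) \<partial>lborel)"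
      by (rule nn_integral_cmult[symmetric]) auto
    also have "\<dots> = (\<integral>\<^sup>+s. ?G x s \<partial>lborel)"
    proof (intro nn_integral_cong)
      fix s :: real
      have "x\<^sup>2 + (0 + x * s)\<^sup>2 = x\<^sup>2 * (1 + s\<^sup>2)"
        by (simp add: power_mult_distrib algebra_simps)
      then show "ennreal \<bar>x\<bar> * ennreal (if x\<^sup>2 + (0 + x * s)\<^sup>2 \<le> a
          then exp (- (x\<^sup>2 + (0 + x * s)\<^sup>2)) / pi else 0) = ?G x s"
        by (auto simp flip: ennreal_mult)
    qed
    finally show ?thesis .
  qed
  have "(\<integral>\<^sup>+x. \<integral>\<^sup>+y. ennreal (if x\<^sup>2 + y\<^sup>2 \<le> a then exp (- (x\<^sup>2 + y\<^sup>2)) / pi else 0) \<partial>lborel \<partial>lborel)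
      = (\<integral>\<^sup>+x. \<integral>\<^sup>+s. ?G x s \<partial>lborel \<partial>lborel)"
    by (intro nn_integral_cong_AE eventually_mono[OF AE_lborel_singleton[of 0]] substitution)
  also have "\<dots> = (\<integral>\<^sup>+s. \<integral>\<^sup>+x. ?G x s \<partial>lborel \<partial>lborel)"
    by (rule lborel_pair.Fubini') auto
  also have "\<dots> = (\<integral>\<^sup>+s. ennreal ((1 - exp (- a)) / pi) * ennreal (1 / (1 + s\<^sup>2)) \<partial>lborel)"
  proof (intro nn_integral_cong)
    fix s :: real
    have "1 + s\<^sup>2 > 0"
      by (simp add: add_pos_nonneg)
    then have "(\<integral>\<^sup>+x. ?G x s \<partial>lborel) = ennreal (1 / pi) * ennreal ((1 - exp (- a)) / (1 + s\<^sup>2))"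
      using a by (subst nn_integral_cmult) (auto simp: nn_integral_abs_times_gaussian_sublevel)
    also have "\<dots> = ennreal ((1 - exp (- a)) / pi) * ennreal (1 / (1 + s\<^sup>2))"
      using a by (simp flip: ennreal_mult)
    finally show "(\<integral>\<^sup>+x. ?G x s \<partial>lborel) = ennreal ((1 - exp (- a)) / pi) * ennreal (1 / (1 + s\<^sup>2))" .
  qed
  also have "\<dots> = ennreal ((1 - exp (- a)) / pi) * ennreal pi"
    by (subst nn_integral_cmult) (auto simp: nn_integral_lborel_inverse_one_plus_square)
  also have "\<dots> = ennreal (1 - exp (- a))"
    using a by (simp flip: ennreal_mult)
  finally show ?thesis .
qed

lemma (in prob_space) std_cgauss_joint_distributed:
  assumes "std_cgauss h"
  shows "distributed M (lborel \<Otimes>\<^sub>M lborel) (\<lambda>\<omega>. (Re (h \<omega>), Im (h \<omega>)))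
      (\<lambda>(x, y). ennreal (exp (- (x\<^sup>2 + y\<^sup>2)) / pi))"
proof -
  have Re: "distributed M lborel (\<lambda>\<omega>. Re (h \<omega>)) (normal_density 0 (sqrt (1/2)))"
    and Im: "distributed M lborel (\<lambda>\<omega>. Im (h \<omega>)) (normal_density 0 (sqrt (1/2)))"
    and indep: "indep_var borel (\<lambda>\<omega>. Re (h \<omega>)) borel (\<lambda>\<omega>. Im (h \<omega>))"
    using assms by (auto simp: std_cgauss_def)
  have "indep_var lborel (\<lambda>\<omega>. Re (h \<omega>)) lborel (\<lambda>\<omega>. Im (h \<omega>))"
    using indep_var_compose[OF indep, of id lborel id lborel] by (simp add: comp_def)
  then have "distributed M (lborel \<Otimes>\<^sub>M lborel) (\<lambda>\<omega>. (Re (h \<omega>), Im (h \<omega>)))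
      (\<lambda>(x, y). ennreal (normal_density 0 (sqrt (1/2)) x) * ennreal (normal_density 0 (sqrt (1/2)) y))"
    by (intro distributed_joint_indep Re Im lborel.sigma_finite_measure_axioms)
  moreover have "normal_density 0 (sqrt (1/2)) x * normal_density 0 (sqrt (1/2)) y
      = exp (- (x\<^sup>2 + y\<^sup>2)) / pi" for x y :: real
    by (simp add: normal_density_def real_sqrt_divide power_divide mult_exp_exp)
  ultimately show ?thesis
    by (subst (asm) distributed_cong_density) (auto simp flip: ennreal_mult)
qed

lemma (in prob_space) std_cgauss_norm_square_exponential:
  assumes "std_cgauss h"
  shows "distributed M lborel (\<lambda>\<omega>. (cmod (h \<omega>))\<^sup>2) (exponential_density 1)"
proof (rule exponential_distributedI)
  note joint = std_cgauss_joint_distributed[OF assms]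
  have [measurable]: "(\<lambda>\<omega>. Re (h \<omega>)) \<in> borel_measurable M" "(\<lambda>\<omega>. Im (h \<omega>)) \<in> borel_measurable M"
    using assms by (auto simp: std_cgauss_def dest: distributed_measurable)
  show "(\<lambda>\<omega>. (cmod (h \<omega>))\<^sup>2) \<in> borel_measurable M"
    unfolding cmod_power2 by measurable
  fix a :: real
  assume a: "0 \<le> a"
  let ?D = "{p :: real \<times> real. (fst p)\<^sup>2 + (snd p)\<^sup>2 \<le> a}"
  have "{p \<in> space (lborel \<Otimes>\<^sub>M lborel). (fst p)\<^sup>2 + (snd p)\<^sup>2 \<le> a} \<in> sets (lborel \<Otimes>\<^sub>M lborel)"
    by measurable
  then have [measurable]: "?D \<in> sets (lborel \<Otimes>\<^sub>M lborel)"
    by (simp add: space_pair_measure)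
  have "emeasure M {\<omega> \<in> space M. (cmod (h \<omega>))\<^sup>2 \<le> a}
      = emeasure M ((\<lambda>\<omega>. (Re (h \<omega>), Im (h \<omega>))) -` ?D \<inter> space M)"
    by (intro arg_cong[where f="emeasure M"]) (auto simp: cmod_power2)
  also have "\<dots> = (\<integral>\<^sup>+p. (\<lambda>(x, y). ennreal (exp (- (x\<^sup>2 + y\<^sup>2)) / pi)) p * indicator ?D p \<partial>(lborel \<Otimes>\<^sub>M lborel))"
    by (rule distributed_emeasure[OF joint]) measurable
  also have "\<dots> = (\<integral>\<^sup>+x. \<integral>\<^sup>+y. ennreal (if x\<^sup>2 + y\<^sup>2 \<le> a then exp (- (x\<^sup>2 + y\<^sup>2)) / pi else 0) \<partial>lborel \<partial>lborel)"
    by (subst lborel.nn_integral_fst[symmetric]) (auto intro!: nn_integral_cong split: split_indicator)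
  also have "\<dots> = 1 - ennreal (exp (- a * 1))"
    using a by (simp add: nn_integral_cgauss_density_disk ennreal_minus flip: ennreal_1)
  finally show "emeasure M {\<omega> \<in> space M. (cmod (h \<omega>))\<^sup>2 \<le> a} = 1 - ennreal (exp (- a * 1))" .
qed (rule zero_less_one)

lemma nn_integral_exponential_density_atLeast:
  fixes l a :: real
  assumes l: "l > 0" and a: "a \<ge> 0"
  shows "(\<integral>\<^sup>+x. ennreal (exponential_density l x) * indicator {a..} x \<partial>lborel) = ennreal (exp (- a * l))"
proof -
  have "(\<integral>\<^sup>+x. ennreal (exponential_density l x) * indicator {a..} x \<partial>lborel)
      = (\<integral>\<^sup>+x. ennreal (l * exp (- x * l)) * indicator {a..} x \<partial>lborel)"
    using a by (intro nn_integral_cong) (auto simp: exponential_density_def split: split_indicator)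
  also have "\<dots> = ennreal (0 - - exp (- a * l))"
  proof (rule nn_integral_FTC_atLeast)
    have "((\<lambda>x. exp (- x * l)) \<longlongrightarrow> 0) at_top"
      using l by real_asymp
    then show "((\<lambda>x. - exp (- x * l)) \<longlongrightarrow> 0) at_top"
      using tendsto_minus by fastforce
  qed (use l in \<open>auto intro!: derivative_eq_intros\<close>)
  finally show ?thesis
    by simp
qed

lemma (in prob_space) exponential_distributed_prob_atLeast:
  assumes D: "distributed M lborel X (exponential_density l)" and l: "l > 0" and a: "a \<ge> 0"
  shows "prob (X -` {a..} \<inter> space M) = exp (- a * l)"
  using distributed_emeasure[OF D, of "{a..}"] nn_integral_exponential_density_atLeast[OF l a]
  by (simp add: emeasure_eq_measure)

text \<open>exp(-c z) times the rate-1 exponential density is 1 / (1 + c) times the rate-(1 + c) density.\<close>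

lemma nn_integral_exponential_density_times_exp:
  fixes b c :: real
  assumes c: "c \<ge> 0"
  shows "(\<integral>\<^sup>+z. ennreal (exponential_density 1 z) * ennreal (exp (- (b + c * z))) \<partial>lborel)
      = ennreal (exp (- b) / (1 + c))"
proof -
  have "(\<integral>\<^sup>+z. ennreal (exponential_density 1 z) * ennreal (exp (- (b + c * z))) \<partial>lborel)
      = (\<integral>\<^sup>+z. ennreal (exp (- b) / (1 + c)) *
          (ennreal (exponential_density (1 + c) z) * indicator {0..} z) \<partial>lborel)"
  proof (intro nn_integral_cong)
    fix z :: real
    have "exp (- z) * exp (- (b + c * z)) = exp (- b) / (1 + c) * ((1 + c) * exp (- z * (1 + c)))"
      using c by (simp add: mult_exp_exp field_simps)
    then show "ennreal (exponential_density 1 z) * ennreal (exp (- (b + c * z)))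
        = ennreal (exp (- b) / (1 + c)) * (ennreal (exponential_density (1 + c) z) * indicator {0..} z)"
      using c by (auto simp: exponential_density_def split: split_indicator simp flip: ennreal_mult)
  qed
  also have "\<dots> = ennreal (exp (- b) / (1 + c))"
    using c by (simp add: nn_integral_cmult nn_integral_exponential_density_atLeast)
  finally show ?thesis .
qed

lemma (in prob_space) exponential_distributed_prob_ge_affine:
  assumes Y: "distributed M lborel Y (exponential_density 1)"
    and Z: "distributed M lborel Z (exponential_density 1)"
    and indep: "indep_var lborel Y lborel Z"
    and b: "b \<ge> 0" and c: "c \<ge> 0"
  shows "prob ((\<lambda>\<omega>. (Y \<omega>, Z \<omega>)) -` {p. b + c * snd p \<le> fst p} \<inter> space M) = exp (- b) / (1 + c)"
proof -
  let ?T = "{p :: real \<times> real. b + c * snd p \<le> fst p}"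
  have "{p \<in> space (lborel \<Otimes>\<^sub>M lborel). b + c * snd p \<le> fst p} \<in> sets (lborel \<Otimes>\<^sub>M lborel)"
    by measurable
  then have [measurable]: "?T \<in> sets (lborel \<Otimes>\<^sub>M lborel)"
    by (simp add: space_pair_measure)
  have tail: "ennreal (exponential_density 1 z) *
        (\<integral>\<^sup>+y. ennreal (exponential_density 1 y) * indicator ?T (y, z) \<partial>lborel)
      = ennreal (exponential_density 1 z) * ennreal (exp (- (b + c * z)))" for z
  proof (cases "z \<ge> 0")
    case True
    then show ?thesis
      using nn_integral_exponential_density_atLeast[of 1 "b + c * z"] b c
      by (simp add: indicator_def)
  qed (simp add: exponential_density_def)
  have "emeasure M ((\<lambda>\<omega>. (Y \<omega>, Z \<omega>)) -` ?T \<inter> space M)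
      = (\<integral>\<^sup>+p. (\<lambda>(y, z). ennreal (exponential_density 1 y) * ennreal (exponential_density 1 z)) p
          * indicator ?T p \<partial>(lborel \<Otimes>\<^sub>M lborel))"
    by (rule distributed_emeasure[OF distributed_joint_indep[OF
          lborel.sigma_finite_measure_axioms lborel.sigma_finite_measure_axioms Y Z indep]]) measurable
  also have "\<dots> = (\<integral>\<^sup>+z. ennreal (exponential_density 1 z) *
      (\<integral>\<^sup>+y. ennreal (exponential_density 1 y) * indicator ?T (y, z) \<partial>lborel) \<partial>lborel)"
    by (subst lborel_pair.nn_integral_snd[symmetric])
      (auto simp: nn_integral_cmult[symmetric] ac_simps intro!: nn_integral_cong)
  also have "\<dots> = (\<integral>\<^sup>+z. ennreal (exponential_density 1 z) * ennreal (exp (- (b + c * z))) \<partial>lborel)"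
    by (intro nn_integral_cong tail)
  also have "\<dots> = ennreal (exp (- b) / (1 + c))"
    by (rule nn_integral_exponential_density_times_exp[OF c])
  finally show ?thesis
    using c by (simp add: emeasure_eq_measure)
qed

lemma (in prob_space) exponential_distributed_prob_tails:
  fixes V :: "nat \<Rightarrow> 'a \<Rightarrow> real"
  assumes exponential: "\<And>i. i \<in> {0, 1, 2} \<Longrightarrow> distributed M lborel (V i) (exponential_density 1)"
    and indep: "indep_vars (\<lambda>_. borel) V {0, 1, 2}"
    and a: "a \<ge> 0" and b: "b \<ge> 0" and c: "c \<ge> 0"
  shows "prob {\<omega> \<in> space M. a \<le> V 0 \<omega> \<and> b + c * V 2 \<omega> \<le> V 1 \<omega>} = exp (- a) * (exp (- b) / (1 + c))"
proof -
  let ?V0 = "\<lambda>\<omega>. restrict (\<lambda>i. V i \<omega>) {0}" and ?V12 = "\<lambda>\<omega>. restrict (\<lambda>i. V i \<omega>) {1, 2}"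
  define A where "A = {f \<in> space (PiM {0::nat} (\<lambda>_. borel :: real measure)). a \<le> f 0}"
  define B where "B = {f \<in> space (PiM {1::nat, 2} (\<lambda>_. borel :: real measure)). b + c * f 2 \<le> f 1}"
  have "A \<in> sets (PiM {0} (\<lambda>_. borel))" "B \<in> sets (PiM {1, 2} (\<lambda>_. borel))"
    unfolding A_def B_def by measurable
  then have "prob ((\<lambda>\<omega>. (?V0 \<omega>, ?V12 \<omega>)) -` (A \<times> B) \<inter> space M)
      = prob (?V0 -` A \<inter> space M) * prob (?V12 -` B \<inter> space M)"
    by (intro indep_varD[OF indep_var_restrict[OF indep]]) auto
  moreover have "?V0 -` A \<inter> space M = V 0 -` {a..} \<inter> space M"
    by (auto simp: A_def space_PiM)
  moreover have "?V12 -` B \<inter> space M = (\<lambda>\<omega>. (V 1 \<omega>, V 2 \<omega>)) -` {p. b + c * snd p \<le> fst p} \<inter> space M"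
    by (auto simp: B_def space_PiM)
  moreover have "(\<lambda>\<omega>. (?V0 \<omega>, ?V12 \<omega>)) -` (A \<times> B) \<inter> space M
      = {\<omega> \<in> space M. a \<le> V 0 \<omega> \<and> b + c * V 2 \<omega> \<le> V 1 \<omega>}"
    by (auto simp: A_def B_def space_PiM)
  moreover have "indep_var lborel ((\<lambda>f. f 1) \<circ> (\<lambda>\<omega>. restrict (\<lambda>i. V i \<omega>) {1}))
      lborel ((\<lambda>f. f 2) \<circ> (\<lambda>\<omega>. restrict (\<lambda>i. V i \<omega>) {2}))"
    by (intro indep_var_compose[OF indep_var_restrict[OF indep]]) auto
  then have "indep_var lborel (V 1) lborel (V 2)"
    by (simp add: comp_def)
  ultimately show ?thesis
    using exponential_distributed_prob_atLeast[OF exponential _ a]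
      exponential_distributed_prob_ge_affine[OF exponential exponential _ b c]
    by simp
qed

lemma secrecy_rate_less_iff:
  fixes gR gD gE Rt X Y Z :: real
  assumes "gR > 0" "gD > 0" "gE \<ge> 0" "Rt > 0" "X \<ge> 0" "Y \<ge> 0" "Z \<ge> 0"
  shows "max (min (max (log 2 ((1 + gD * Y) / (1 + gE * Z))) 0) (log 2 (1 + gR * X))) 0 < Rt
     \<longleftrightarrow> \<not> ((2 powr Rt - 1) / gR \<le> X \<and> (2 powr Rt - 1) / gD + 2 powr Rt * gE / gD * Z \<le> Y)"
proof -
  have pos: "1 + gR * X > 0" "1 + gD * Y > 0" "1 + gE * Z > 0"
    using assms by (auto intro: add_pos_nonneg)
  have "log 2 (1 + gR * X) < Rt \<longleftrightarrow> 1 + gR * X < 2 powr Rt"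
    using pos by (simp add: log_less_iff)
  also have "\<dots> \<longleftrightarrow> X < (2 powr Rt - 1) / gR"
    using assms(1) by (simp add: field_simps)
  finally have source_relay: "log 2 (1 + gR * X) < Rt \<longleftrightarrow> X < (2 powr Rt - 1) / gR" .
  have "log 2 ((1 + gD * Y) / (1 + gE * Z)) < Rt \<longleftrightarrow> 1 + gD * Y < 2 powr Rt * (1 + gE * Z)"
    using pos by (simp add: log_less_iff divide_less_eq)
  also have "\<dots> \<longleftrightarrow> Y < (2 powr Rt - 1 + 2 powr Rt * gE * Z) / gD"
    using assms(2) by (simp add: less_divide_eq algebra_simps)
  also have "\<dots> \<longleftrightarrow> Y < (2 powr Rt - 1) / gD + 2 powr Rt * gE / gD * Z"
    by (simp add: add_divide_distrib)
  finally have relay_destination: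
    "log 2 ((1 + gD * Y) / (1 + gE * Z)) < Rt \<longleftrightarrow> Y < (2 powr Rt - 1) / gD + 2 powr Rt * gE / gD * Z" .
  show ?thesis
    using assms(4) source_relay relay_destination by auto
qed

theorem theorem1:
  fixes M :: "'a measure" and hSR hRD hRE :: "'a \<Rightarrow> complex"
    and gR gD gE Rt :: real
  assumes "prob_space M"
    and "gR > 0" and "gD > 0" and "gE > 0" and "Rt > 0"
    and "prob_space.std_cgauss M hSR" and "prob_space.std_cgauss M hRD"
    and "prob_space.std_cgauss M hRE"
    and "prob_space.indep_vars M (\<lambda>_. borel) (\<lambda>i::nat. [hSR, hRD, hRE] ! i) {0, 1, 2}"
  shows "let RRD = (\<lambda>\<omega>. max (log 2 ((1 + gD * (cmod (hRD \<omega>))\<^sup>2) / (1 + gE * (cmod (hRE \<omega>))\<^sup>2))) 0);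
             RSR = (\<lambda>\<omega>. log 2 (1 + gR * (cmod (hSR \<omega>))\<^sup>2));
             R1 = (\<lambda>\<omega>. max (min (RRD \<omega>) (RSR \<omega>)) 0)
         in measure M {\<omega> \<in> space M. R1 \<omega> < Rt}
            = 1 - exp (- (2 powr Rt - 1) / gR - (2 powr Rt - 1) / gD)
                  * (1 / (1 + 2 powr Rt / gD * gE))"
proof -
  interpret prob_space M by fact
  let ?R1 = "\<lambda>\<omega>. max (min (max (log 2 ((1 + gD * (cmod (hRD \<omega>))\<^sup>2) / (1 + gE * (cmod (hRE \<omega>))\<^sup>2))) 0)
      (log 2 (1 + gR * (cmod (hSR \<omega>))\<^sup>2))) 0"
  define V where "V i \<omega> = (cmod (([hSR, hRD, hRE] ! i) \<omega>))\<^sup>2" for i \<omega>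
  define a b c where "a = (2 powr Rt - 1) / gR" and "b = (2 powr Rt - 1) / gD" and "c = 2 powr Rt * gE / gD"
  have "2 powr Rt > 1"
    using assms(5) by simp
  then have "a \<ge> 0" "b \<ge> 0" "c \<ge> 0"
    using assms(2-4) by (simp_all add: a_def b_def c_def)
  have exponential: "distributed M lborel (V i) (exponential_density 1)" if "i \<in> {0, 1, 2}" for i
    using that assms(6-8) std_cgauss_norm_square_exponential by (auto simp: V_def[abs_def])
  then have [measurable]: "V i \<in> borel_measurable M" if "i \<in> {0, 1, 2}" for i
    using distributed_measurable[OF exponential[OF that]] by simp
  have indep: "indep_vars (\<lambda>_. borel) V {0, 1, 2}"
    unfolding V_def by (rule indep_vars_compose2[OF assms(9)]) measurable
  have V: "V 0 \<omega> = (cmod (hSR \<omega>))\<^sup>2" "V 1 \<omega> = (cmod (hRD \<omega>))\<^sup>2" "V 2 \<omega> = (cmod (hRE \<omega>))\<^sup>2" for \<omega>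
    by (simp_all add: V_def)
  have "?R1 \<omega> < Rt \<longleftrightarrow> \<not> (a \<le> V 0 \<omega> \<and> b + c * V 2 \<omega> \<le> V 1 \<omega>)" for \<omega>
    unfolding a_def b_def c_def V
    by (rule secrecy_rate_less_iff[OF assms(2,3) less_imp_le[OF assms(4)] assms(5)]) simp_all
  then have outage: "{\<omega> \<in> space M. ?R1 \<omega> < Rt}
      = space M - {\<omega> \<in> space M. a \<le> V 0 \<omega> \<and> b + c * V 2 \<omega> \<le> V 1 \<omega>}"
    by blast
  have no_outage: "{\<omega> \<in> space M. a \<le> V 0 \<omega> \<and> b + c * V 2 \<omega> \<le> V 1 \<omega>} \<in> events"
    by measurable
  have "prob {\<omega> \<in> space M. ?R1 \<omega> < Rt} = 1 - exp (- a) * (exp (- b) / (1 + c))"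
    using exponential_distributed_prob_tails[OF exponential indep \<open>a \<ge> 0\<close> \<open>b \<ge> 0\<close> \<open>c \<ge> 0\<close>]
    unfolding outage prob_compl[OF no_outage] by (rule arg_cong)
  moreover have "- (2 powr Rt - 1) / gR - (2 powr Rt - 1) / gD = - a + - b" "2 powr Rt / gD * gE = c"
    by (simp_all add: a_def b_def c_def diff_divide_distrib)
  ultimately show ?thesis
    unfolding Let_def by (simp add: mult_exp_exp)
qed

end
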